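(* There exists a time-invariant SMP system, with parameter set $\bar{\mathbb{S}}_\theta$ and random parameter vector $\bar v_t(\bar\theta)$, such that for every positive integer $d_\theta$ and every choice of random vertices $v_t^{(1)},\dots,v_t^{(d_\theta)}$ (i.i.d. with respect to $t$ and independent of the parameter), the random polytopic system with $v_t(\theta)=\sum_{k=1}^{d_\theta}[\theta]_kv_t^{(k)}$, $\theta\in\mathbb{S}_\theta:=\{\theta\in\mathbb{R}^{d_\theta}:[\theta]_k\ge0,\sum_k[\theta]_k=1\}$, does not satisfy both of the following: (A) for every $\bar\theta\in\bar{\mathbb{S}}_\theta$ there exists $\theta\in\mathbb{S}_\theta$ with $\mathrm{E}[\bar v_t(\bar\theta)\bar v_t(\bar\theta)^\top|\bar\theta]=\mathrm{E}[v_t(\theta)v_t(\theta)^\top|\theta]$; (B) for every $\theta\in\mathbb{S}_\theta$ there exists $\bar\theta\in\bar{\mathbb{S}}_\theta$ with $\mathrm{E}[\bar v_t(\bar\theta)\bar v_t(\bar\theta)^\top|\bar\theta]=\mathrm{E}[v_t(\theta)v_t(\theta)^\top|\theta]$.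
   Context: A system $x_{t+1}=A_t(\theta_t)x_t+B_t(\theta_t)u_t$ ($x_t\in\mathbb{R}^n$, $u_t\in\mathbb{R}^m$, uncertain $\theta_t$ in a parameter set, random $v_t(\theta_t):=\mathrm{vec}([A_t(\theta_t),B_t(\theta_t)])\in\mathbb{R}^{n(n+m)}$, $\mathrm{vec}$ stacking columns, with conditional density given the parameter, independent over $t$) is second moment polytopic (SMP) if there exist a positive integer $N$, symmetric $M^{(1)},\dots,M^{(N)}\in\mathbb{R}^{n(n+m)\times n(n+m)}$ and a map $\phi$ from the parameter set into $\mathbb{P}_N:=\{\varphi\in\mathbb{R}^N:\varphi_k\ge0,\sum\varphi_k=1\}$ with $\mathrm{E}[v_tv_t^\top|\theta_\bullet]=\sum_k[\phi(\theta_t)]_kM^{(k)}$ for all $t$ and all parameter sequences; it is time-invariant (TI) if $\theta_t=\theta$ is constant in $t$. $\mathrm{E}[\cdot|\theta]$ denotes conditional expectation given the (constant) parameter. *)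

theory Defs
  imports "HOL-Probability.Probability"
begin

text \<open>Vectors in R^p are represented as functions nat => real restricted to the
  index set {..<p}; p = n*(n+m) is the length of vec([A,B]).
  Random vectors are represented by their laws (probability measures on the
  product space).\<close>

definition prob_simplex :: "nat \<Rightarrow> (nat \<Rightarrow> real) set" where
  "prob_simplex N = {\<phi>. (\<forall>k<N. 0 \<le> \<phi> k) \<and> (\<Sum>k<N. \<phi> k) = 1 \<and> (\<forall>k\<ge>N. \<phi> k = 0)}"

definition vec_space :: "nat \<Rightarrow> (nat \<Rightarrow> real) measure" where
  "vec_space p = PiM {..<p} (\<lambda>_. lborel)"

definition smom :: "(nat \<Rightarrow> real) measure \<Rightarrow> nat \<Rightarrow> nat \<Rightarrow> real" where
  "smom Q i j = (\<integral>x. x i * x j \<partial>Q)"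

text \<open>A time-invariant SMP system with state dim n, input dim m, parameter set S,
  and (i.i.d. over t) law Q th of v_t(th) = vec([A_t(th), B_t(th)]) given the
  constant parameter th; the law has a density (w.r.t. Lebesgue measure on R^p)
  and finite second moments.\<close>
definition TI_SMP ::
  "nat \<Rightarrow> nat \<Rightarrow> (nat \<Rightarrow> real) set \<Rightarrow> ((nat \<Rightarrow> real) \<Rightarrow> (nat \<Rightarrow> real) measure) \<Rightarrow> bool" where
  "TI_SMP n m S Q \<longleftrightarrow>
     (let p = n * (n + m) in
       (\<forall>th\<in>S. prob_space (Q th) \<and>
          (\<exists>f. f \<in> borel_measurable (vec_space p) \<and> Q th = density (vec_space p) f) \<and>
          (\<forall>i<p. integrable (Q th) (\<lambda>x. (x i)\<^sup>2))) \<and>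
       (\<exists>N>0. \<exists>Ms :: nat \<Rightarrow> nat \<Rightarrow> nat \<Rightarrow> real. \<exists>\<phi> :: (nat \<Rightarrow> real) \<Rightarrow> nat \<Rightarrow> real.
          (\<forall>k<N. \<forall>i<p. \<forall>j<p. Ms k i j = Ms k j i) \<and>
          (\<forall>th\<in>S. \<phi> th \<in> prob_simplex N) \<and>
          (\<forall>th\<in>S. \<forall>i<p. \<forall>j<p. smom (Q th) i j = (\<Sum>k<N. \<phi> th k * Ms k i j))))"

text \<open>Joint law P of the d random vertices v^(1..d) in R^p (coordinate (k,i) is
  component i of vertex k), i.i.d. over t, independent of the parameter, with
  finite second moments.\<close>
definition vertex_law :: "nat \<Rightarrow> nat \<Rightarrow> ((nat \<times> nat) \<Rightarrow> real) measure \<Rightarrow> bool" where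
  "vertex_law d p P \<longleftrightarrow> prob_space P \<and>
     sets P = sets (PiM ({..<d} \<times> {..<p}) (\<lambda>_. borel :: real measure)) \<and>
     (\<forall>k<d. \<forall>i<p. integrable P (\<lambda>x. (x (k, i))\<^sup>2))"

definition poly_smom :: "nat \<Rightarrow> ((nat \<times> nat) \<Rightarrow> real) measure \<Rightarrow> (nat \<Rightarrow> real) \<Rightarrow> nat \<Rightarrow> nat \<Rightarrow> real" where
  "poly_smom d P th i j =
     (\<integral>x. (\<Sum>k<d. th k * x (k, i)) * (\<Sum>k<d. th k * x (k, j)) \<partial>P)"

end

theory Submission imports Defs begin

text \<open>For a random polytopic system every entry of \<open>E[v(\<theta>) v(\<theta>)\<^sup>T]\<close> is a quadratic
  polynomial in \<open>\<theta>\<close>, so it maps the convex simplex onto a connected set of reals, and (A)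
  together with (B) says that this set equals the set of the corresponding entries of the
  SMP system. A time-invariant system with finitely many parameters is always SMP (one
  vertex matrix per parameter), but then that set is finite, hence connected only if it is
  a singleton. Two parameters under which \<open>v\<close> is centred Gaussian with variances 1 and 4
  therefore give a counterexample.\<close>

lemma smom_sym: "smom Q i j = smom Q j i"
  unfolding smom_def by (simp add: mult.commute)

lemma TI_SMP_finite_parameter_set:
  fixes S :: "(nat \<Rightarrow> real) set"
  assumes "finite S" "S \<noteq> {}"
    and "\<forall>th\<in>S. prob_space (Q th) \<and>
          (\<exists>f. f \<in> borel_measurable (vec_space (n * (n + m))) \<and>
               Q th = density (vec_space (n * (n + m))) f) \<and>
          (\<forall>i<n * (n + m). integrable (Q th) (\<lambda>x. (x i)\<^sup>2))"
  shows "TI_SMP n m S Q"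
proof -
  obtain e where e: "bij_betw e {..<card S} S"
    using ex_bij_betw_nat_finite[OF assms(1)] by (auto simp: atLeast0LessThan)
  define \<phi> where "\<phi> th k = (if k < card S \<and> e k = th then 1 else 0 :: real)" for th k
  have weight_sum: "(\<Sum>k<card S. \<phi> th k * f k) = f (inv_into {..<card S} e th)"
    if "th \<in> S" for th and f :: "nat \<Rightarrow> real"
  proof -
    have "(\<Sum>k<card S. \<phi> th k * f k) = (\<Sum>k\<in>{inv_into {..<card S} e th}. f k)"
      using e that inv_into_into[of th e "{..<card S}"] unfolding \<phi>_def
      by (intro sum.mono_neutral_cong_right)
         (auto simp: bij_betw_inv_into_right bij_betw_inv_into_left bij_betw_def)
    then show ?thesis by simp
  qed
  have "\<phi> th \<in> prob_simplex (card S)" if "th \<in> S" for th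
    using weight_sum[OF that, of "\<lambda>_. 1"] unfolding prob_simplex_def by (auto simp: \<phi>_def)
  moreover have "smom (Q th) i j = (\<Sum>k<card S. \<phi> th k * smom (Q (e k)) i j)" if "th \<in> S" for th i j
    using weight_sum[OF that] e that by (simp add: bij_betw_inv_into_right)
  moreover have "card S > 0"
    using assms(1,2) by (simp add: card_gt_0_iff)
  ultimately show ?thesis
    using assms(3) unfolding TI_SMP_def Let_def
    by (intro conjI exI[of _ "card S"] exI[of _ "\<lambda>k. smom (Q (e k))"] exI[of _ \<phi>])
       (auto intro: smom_sym)
qed

interpretation lborel_product: product_sigma_finite "\<lambda>_::nat. lborel :: real measure"
  by standard

definition normal_vec_law :: "nat \<Rightarrow> real \<Rightarrow> (nat \<Rightarrow> real) measure" where
  "normal_vec_law p \<sigma> = density (vec_space p) (\<lambda>x. \<Prod>l<p. normal_density 0 \<sigma> (x l))"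

lemma normal_vec_law_density_measurable [measurable]:
  "(\<lambda>x. \<Prod>l<p. normal_density 0 \<sigma> (x l)) \<in> borel_measurable (vec_space p)"
  unfolding vec_space_def by measurable

lemma normal_vec_law_has_density:
  "\<exists>f. f \<in> borel_measurable (vec_space p) \<and> normal_vec_law p \<sigma> = density (vec_space p) f"
  unfolding normal_vec_law_def
  by (rule exI[of _ "\<lambda>x. ennreal (\<Prod>l<p. normal_density 0 \<sigma> (x l))"]) simp

lemma prob_space_normal_vec_law:
  assumes "0 < \<sigma>"
  shows "prob_space (normal_vec_law p \<sigma>)"
proof
  have "emeasure (normal_vec_law p \<sigma>) (space (normal_vec_law p \<sigma>))
      = (\<integral>\<^sup>+ x. (\<Prod>l<p. ennreal (normal_density 0 \<sigma> (x l))) \<partial>vec_space p)"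
    unfolding normal_vec_law_def
    by (simp add: emeasure_density prod_ennreal normal_density_nonneg)
  also have "\<dots> = (\<Prod>l<p. \<integral>\<^sup>+ t. ennreal (normal_density 0 \<sigma> t) \<partial>lborel)"
    unfolding vec_space_def by (rule lborel_product.product_nn_integral_prod) auto
  also have "\<dots> = 1"
    using prob_space.emeasure_space_1[OF prob_space_normal_density[OF assms]]
    by (simp add: emeasure_density)
  finally show "emeasure (normal_vec_law p \<sigma>) (space (normal_vec_law p \<sigma>)) = 1" .
qed

lemma normal_vec_density_times_square:
  fixes p :: nat
  assumes "i < p"
  shows "(\<Prod>l<p. normal_density 0 \<sigma> (x l)) * (x i)\<^sup>2
       = (\<Prod>l<p. normal_density 0 \<sigma> (x l) * (if l = i then (x l)\<^sup>2 else 1))"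
  using assms by (simp add: prod.distrib prod.delta)

lemma integrable_normal_density_times_square_if:
  assumes "0 < \<sigma>"
  shows "integrable lborel (\<lambda>t. normal_density 0 \<sigma> t * (if b then t\<^sup>2 else 1))"
  using assms integrable_normal_moment[OF assms, of 0 2] by (cases b) simp_all

lemma integral_normal_density_times_square_if:
  assumes "0 < \<sigma>"
  shows "(\<integral>t. normal_density 0 \<sigma> t * (if b then t\<^sup>2 else 1) \<partial>lborel) = (if b then \<sigma>\<^sup>2 else 1)"
  using integral_normal_moment_even[OF assms, of 0 1] assms by (simp add: power2_eq_square)

lemma integrable_normal_vec_density_times_square:
  assumes "0 < \<sigma>" "i < p"
  shows "integrable (vec_space p) (\<lambda>x. (\<Prod>l<p. normal_density 0 \<sigma> (x l)) * (x i)\<^sup>2)"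
  unfolding normal_vec_density_times_square[OF assms(2)] vec_space_def
  using assms(1)
  by (intro lborel_product.product_integrable_prod integrable_normal_density_times_square_if) auto

lemma integrable_normal_vec_law_square:
  assumes "0 < \<sigma>" "i < p"
  shows "integrable (normal_vec_law p \<sigma>) (\<lambda>x. (x i)\<^sup>2)"
  unfolding normal_vec_law_def
  using integrable_normal_vec_density_times_square[OF assms] assms(2)
  by (subst integrable_density) (auto simp: prod_nonneg normal_density_nonneg vec_space_def)

lemma smom_normal_vec_law:
  assumes "0 < \<sigma>" "i < p"
  shows "smom (normal_vec_law p \<sigma>) i i = \<sigma>\<^sup>2"
proof -
  have "smom (normal_vec_law p \<sigma>) i i = (\<integral>x. (\<Prod>l<p. normal_density 0 \<sigma> (x l)) * (x i)\<^sup>2 \<partial>vec_space p)"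
    unfolding smom_def normal_vec_law_def using assms(2)
    by (subst integral_density)
       (auto simp: prod_nonneg normal_density_nonneg vec_space_def power2_eq_square)
  also have "\<dots> = (\<Prod>l<p. \<integral>t. normal_density 0 \<sigma> t * (if l = i then t\<^sup>2 else 1) \<partial>lborel)"
    unfolding normal_vec_density_times_square[OF assms(2)] vec_space_def
    using assms(1)
    by (intro lborel_product.product_integral_prod integrable_normal_density_times_square_if) auto
  also have "\<dots> = \<sigma>\<^sup>2"
    using assms by (simp add: integral_normal_density_times_square_if)
  finally show ?thesis .
qed

lemma vertex_law_measurable_coord:
  assumes "vertex_law d p P" "k < d" "i < p"
  shows "(\<lambda>x. x (k, i)) \<in> borel_measurable P"
proof -
  have "sets P = sets (PiM ({..<d} \<times> {..<p}) (\<lambda>_. borel :: real measure))"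
    using assms(1) unfolding vertex_law_def by simp
  moreover have "(\<lambda>x. x (k, i)) \<in> borel_measurable (PiM ({..<d} \<times> {..<p}) (\<lambda>_. borel))"
    using assms(2,3) by simp
  ultimately show ?thesis
    by (simp cong: measurable_cong_sets)
qed

lemma abs_mult_le_sum_squares: "\<bar>(a::real) * b\<bar> \<le> a\<^sup>2 + b\<^sup>2"
proof -
  have "2 * \<bar>a\<bar> * \<bar>b\<bar> \<le> a\<^sup>2 + b\<^sup>2"
    using sum_squares_bound[of "\<bar>a\<bar>" "\<bar>b\<bar>"] by simp
  moreover have "0 \<le> \<bar>a\<bar> * \<bar>b\<bar>" by simp
  ultimately show ?thesis unfolding abs_mult mult.assoc by linarith
qed

lemma vertex_law_integrable_mult:
  assumes "vertex_law d p P" "k < d" "i < p" "l < d" "j < p"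
  shows "integrable P (\<lambda>x. x (k, i) * x (l, j))"
proof (rule Bochner_Integration.integrable_bound)
  show "integrable P (\<lambda>x. (x (k, i))\<^sup>2 + (x (l, j))\<^sup>2)"
    using assms unfolding vertex_law_def by auto
  show "(\<lambda>x. x (k, i) * x (l, j)) \<in> borel_measurable P"
    using vertex_law_measurable_coord[OF assms(1,2,3)] vertex_law_measurable_coord[OF assms(1,4,5)]
    by simp
  show "AE x in P. norm (x (k, i) * x (l, j)) \<le> norm ((x (k, i))\<^sup>2 + (x (l, j))\<^sup>2)"
    using abs_mult_le_sum_squares by simp
qed

lemma poly_smom_quadratic_form:
  assumes "vertex_law d p P" "i < p" "j < p"
  shows "poly_smom d P th i j = (\<Sum>k<d. \<Sum>l<d. th k * th l * (\<integral>x. x (k, i) * x (l, j) \<partial>P))"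
proof -
  have "poly_smom d P th i j = (\<integral>x. (\<Sum>k<d. \<Sum>l<d. th k * th l * (x (k, i) * x (l, j))) \<partial>P)"
    unfolding poly_smom_def
    by (rule Bochner_Integration.integral_cong) (auto simp: sum_product algebra_simps)
  also have "\<dots> = (\<Sum>k<d. \<Sum>l<d. th k * th l * (\<integral>x. x (k, i) * x (l, j) \<partial>P))"
    using vertex_law_integrable_mult[OF assms(1) _ assms(2) _ assms(3)]
    by (subst Bochner_Integration.integral_sum) (auto intro!: integrable_sum sum.cong)
  finally show ?thesis .
qed

lemma prob_simplex_convex_comb:
  assumes "a \<in> prob_simplex d" "b \<in> prob_simplex d" "0 \<le> t" "t \<le> 1"
  shows "(\<lambda>k. (1 - t) * a k + t * b k) \<in> prob_simplex d"
  using assms unfolding prob_simplex_def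
  by (auto simp: sum.distrib sum_distrib_left[symmetric])

lemma connected_poly_smom_image:
  assumes "vertex_law d p P" "i < p" "j < p"
  shows "connected ((\<lambda>th. poly_smom d P th i j) ` prob_simplex d)"
proof (unfold connected_iff_interval, intro ballI allI impI)
  fix y z w
  assume "y \<in> (\<lambda>th. poly_smom d P th i j) ` prob_simplex d" "w \<le> z"
    and "z \<in> (\<lambda>th. poly_smom d P th i j) ` prob_simplex d" "y \<le> w"
  then obtain a b where a: "a \<in> prob_simplex d" "poly_smom d P a i j \<le> w"
    and b: "b \<in> prob_simplex d" "w \<le> poly_smom d P b i j"
    by auto
  define c where "c t = (\<lambda>k. (1 - t) * a k + t * b k)" for t :: real
  have "continuous_on {0..1} (\<lambda>t. poly_smom d P (c t) i j)"
    unfolding poly_smom_quadratic_form[OF assms] c_def by (intro continuous_intros)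
  then obtain t where t: "0 \<le> t" "t \<le> 1" "poly_smom d P (c t) i j = w"
    using IVT'[of "\<lambda>t. poly_smom d P (c t) i j" 0 w 1] a(2) b(2) by (auto simp: c_def)
  moreover have "c t \<in> prob_simplex d"
    unfolding c_def using prob_simplex_convex_comb[OF a(1) b(1) t(1,2)] .
  ultimately show "w \<in> (\<lambda>th. poly_smom d P th i j) ` prob_simplex d"
    by (metis image_eqI)
qed

lemma no_two_sided_polytopic_match:
  assumes "vertex_law d p P" "k < p" "l < p" "finite S"
    and "a \<in> S" "b \<in> S" "smom (Q a) k l \<noteq> smom (Q b) k l"
  shows "\<not> ((\<forall>thb\<in>S. \<exists>th\<in>prob_simplex d. \<forall>i<p. \<forall>j<p. smom (Q thb) i j = poly_smom d P th i j) \<and>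
           (\<forall>th\<in>prob_simplex d. \<exists>thb\<in>S. \<forall>i<p. \<forall>j<p. smom (Q thb) i j = poly_smom d P th i j))"
proof
  assume "(\<forall>thb\<in>S. \<exists>th\<in>prob_simplex d. \<forall>i<p. \<forall>j<p. smom (Q thb) i j = poly_smom d P th i j) \<and>
          (\<forall>th\<in>prob_simplex d. \<exists>thb\<in>S. \<forall>i<p. \<forall>j<p. smom (Q thb) i j = poly_smom d P th i j)"
  then have "(\<forall>thb\<in>S. \<exists>th\<in>prob_simplex d. smom (Q thb) k l = poly_smom d P th k l) \<and>
             (\<forall>th\<in>prob_simplex d. \<exists>thb\<in>S. smom (Q thb) k l = poly_smom d P th k l)"
    using assms(2,3) by meson
  then have "(\<lambda>thb. smom (Q thb) k l) ` S = (\<lambda>th. poly_smom d P th k l) ` prob_simplex d"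
    by (auto simp: image_def) metis
  then have "connected ((\<lambda>thb. smom (Q thb) k l) ` S)"
    using connected_poly_smom_image[OF assms(1-3)] by simp
  then obtain c where "(\<lambda>thb. smom (Q thb) k l) ` S = {c}"
    using connected_finite_iff_sing assms(4,5) by blast
  then show False
    using assms(5-7) by (metis image_eqI singletonD)
qed

theorem proposition2:
  shows "\<exists>n m :: nat. \<exists>S :: (nat \<Rightarrow> real) set. \<exists>Q.
     0 < n \<and> 0 < m \<and> S \<noteq> {} \<and> TI_SMP n m S Q \<and>
     (\<forall>d>0. \<forall>P. vertex_law d (n * (n + m)) P \<longrightarrow>
        \<not> ((\<forall>thb\<in>S. \<exists>th\<in>prob_simplex d. \<forall>i<n * (n + m). \<forall>j<n * (n + m).
                smom (Q thb) i j = poly_smom d P th i j) \<and>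
           (\<forall>th\<in>prob_simplex d. \<exists>thb\<in>S. \<forall>i<n * (n + m). \<forall>j<n * (n + m).
                smom (Q thb) i j = poly_smom d P th i j)))"
proof -
  define S :: "(nat \<Rightarrow> real) set" where "S = {\<lambda>_. 1, \<lambda>_. 2}"
  define Q where "Q thb = normal_vec_law 2 (thb 0)" for thb :: "nat \<Rightarrow> real"
  have p: "1 * (1 + 1) = (2::nat)"
    by simp
  have "\<forall>thb\<in>S. prob_space (Q thb) \<and>
      (\<exists>f. f \<in> borel_measurable (vec_space 2) \<and> Q thb = density (vec_space 2) f) \<and>
      (\<forall>i<2. integrable (Q thb) (\<lambda>x. (x i)\<^sup>2))"
    unfolding S_def Q_def
    by (auto simp: prob_space_normal_vec_law normal_vec_law_has_density integrable_normal_vec_law_square)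
  then have "TI_SMP 1 1 S Q"
    by (intro TI_SMP_finite_parameter_set[where n = 1 and m = 1, unfolded p]) (simp_all add: S_def)
  moreover have "smom (Q (\<lambda>_. 1)) 0 0 \<noteq> smom (Q (\<lambda>_. 2)) 0 0"
    by (simp add: Q_def smom_normal_vec_law)
  moreover have "finite S" "S \<noteq> {}" "(\<lambda>_. 1) \<in> S" "(\<lambda>_. 2) \<in> S"
    by (simp_all add: S_def)
  ultimately show ?thesis
    using no_two_sided_polytopic_match[where p = 2 and k = 0 and l = 0 and S = S and Q = Q] pos2
    by (intro exI[of _ 1] exI[of _ S] exI[of _ Q]) (simp only: p, blast)
qed

end
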